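(* Let $t\ge 2$ be an integer and let $M$ be a $t$-spike of order at least $4t-4$. Then $M$ is $(2t-1)$-connected.
   Context: For a positive integer $t$, a matroid $M$ is a $t$-spike of order $r$ (where $r\ge t$) if there is a partition $(A_1,\ldots,A_r)$ of $E(M)$ into 2-element sets such that, for every $t$-element subset $J\subseteq\{1,\dots,r\}$, the set $\bigcup_{j\in J}A_j$ is both a circuit and a cocircuit of $M$. The connectivity function of $M$ with ground set $E$ is $\lambda(X)=r(X)+r(E-X)-r(M)$. A partition $(X,E-X)$ is a $k$-separation if $\lambda(X)<k$, $|X|\ge k$ and $|E-X|\ge k$; $M$ is $n$-connected if it has no $k$-separation for any $k<n$. *)

theory Defs
  imports Main
begin

definition matroid :: "'a set \<Rightarrow> ('a set \<Rightarrow> bool) \<Rightarrow> bool" where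
  "matroid E indep \<longleftrightarrow> finite E
     \<and> (\<forall>X. indep X \<longrightarrow> X \<subseteq> E)
     \<and> indep {}
     \<and> (\<forall>X Y. indep Y \<and> X \<subseteq> Y \<longrightarrow> indep X)
     \<and> (\<forall>X Y. indep X \<and> indep Y \<and> card X < card Y \<longrightarrow> (\<exists>e\<in>Y - X. indep (insert e X)))"

definition mrank :: "('a set \<Rightarrow> bool) \<Rightarrow> 'a set \<Rightarrow> nat" where
  "mrank indep X = Max {card I | I. I \<subseteq> X \<and> indep I}"

definition mbasis :: "('a set \<Rightarrow> bool) \<Rightarrow> 'a set \<Rightarrow> bool" where
  "mbasis indep B \<longleftrightarrow> indep B \<and> (\<forall>X. indep X \<and> B \<subseteq> X \<longrightarrow> X = B)"

definition mcircuit :: "'a set \<Rightarrow> ('a set \<Rightarrow> bool) \<Rightarrow> 'a set \<Rightarrow> bool" where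
  "mcircuit E indep C \<longleftrightarrow> C \<subseteq> E \<and> \<not> indep C \<and> (\<forall>D. D \<subset> C \<longrightarrow> indep D)"

definition dual_indep :: "'a set \<Rightarrow> ('a set \<Rightarrow> bool) \<Rightarrow> 'a set \<Rightarrow> bool" where
  "dual_indep E indep X \<longleftrightarrow> X \<subseteq> E \<and> (\<exists>B. mbasis indep B \<and> X \<subseteq> E - B)"

definition mcocircuit :: "'a set \<Rightarrow> ('a set \<Rightarrow> bool) \<Rightarrow> 'a set \<Rightarrow> bool" where
  "mcocircuit E indep C \<longleftrightarrow> mcircuit E (dual_indep E indep) C"

definition mconn :: "'a set \<Rightarrow> ('a set \<Rightarrow> bool) \<Rightarrow> 'a set \<Rightarrow> int" where
  "mconn E indep X = int (mrank indep X) + int (mrank indep (E - X)) - int (mrank indep E)"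

definition k_separation :: "'a set \<Rightarrow> ('a set \<Rightarrow> bool) \<Rightarrow> nat \<Rightarrow> 'a set \<Rightarrow> bool" where
  "k_separation E indep k X \<longleftrightarrow> X \<subseteq> E \<and> mconn E indep X < int k
     \<and> card X \<ge> k \<and> card (E - X) \<ge> k"

definition n_connected :: "'a set \<Rightarrow> ('a set \<Rightarrow> bool) \<Rightarrow> nat \<Rightarrow> bool" where
  "n_connected E indep n \<longleftrightarrow> (\<forall>k. 0 < k \<and> k < n \<longrightarrow> (\<forall>X. \<not> k_separation E indep k X))"

definition t_spike :: "'a set \<Rightarrow> ('a set \<Rightarrow> bool) \<Rightarrow> nat \<Rightarrow> nat \<Rightarrow> bool" where
  "t_spike E indep t r \<longleftrightarrow> 0 < t \<and> t \<le> r \<and>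
     (\<exists>A :: nat \<Rightarrow> 'a set.
        (\<forall>i\<in>{1..r}. card (A i) = 2)
      \<and> (\<forall>i\<in>{1..r}. \<forall>j\<in>{1..r}. i \<noteq> j \<longrightarrow> A i \<inter> A j = {})
      \<and> (\<Union>i\<in>{1..r}. A i) = E
      \<and> (\<forall>J. J \<subseteq> {1..r} \<and> card J = t \<longrightarrow>
            mcircuit E indep (\<Union>j\<in>J. A j) \<and> mcocircuit E indep (\<Union>j\<in>J. A j)))"

end

theory Submission
  imports Defs
begin

text \<open>
  Fix X \<subseteq> E. Let Z \<subseteq> X consist of both elements of fewer than t pairs contained in X and of
  one element of each of some further pairs meeting X, such that at least t - 1 pairs are left
  untouched. A circuit inside Z meets no t-pair cocircuit in exactly one element, and using the
  untouched pairs this forces it into the full pairs of Z; but these lie properly inside a t-pair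
  circuit. Hence Z is independent, and dually coindependent, which gives
  \<lambda>(X) \<ge> 2|Z| - |X|.
\<close>

lemma matroid_finite: "matroid E indep \<Longrightarrow> finite E"
  by (simp add: matroid_def)

lemma matroid_indep_subset: "matroid E indep \<Longrightarrow> indep X \<Longrightarrow> X \<subseteq> E"
  by (simp add: matroid_def)

lemma matroid_indep_empty: "matroid E indep \<Longrightarrow> indep {}"
  by (simp add: matroid_def)

lemma matroid_indep_mono: "matroid E indep \<Longrightarrow> indep Y \<Longrightarrow> X \<subseteq> Y \<Longrightarrow> indep X"
  unfolding matroid_def by blast

lemma matroid_augment:
  "matroid E indep \<Longrightarrow> indep X \<Longrightarrow> indep Y \<Longrightarrow> card X < card Y
    \<Longrightarrow> \<exists>e\<in>Y - X. indep (insert e X)"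
  unfolding matroid_def by blast

lemma card_indep_le_card_basis:
  assumes M: "matroid E indep" and B: "mbasis indep B" and I: "indep I"
  shows "card I \<le> card B"
proof (rule ccontr)
  assume "\<not> card I \<le> card B"
  then obtain e where e: "e \<in> I - B" "indep (insert e B)"
    using matroid_augment[OF M _ I] B unfolding mbasis_def by force
  then have "insert e B = B" using B unfolding mbasis_def by blast
  with e show False by blast
qed

lemma mbasis_if_card_ge_basis:
  assumes M: "matroid E indep" and B: "mbasis indep B" and I: "indep I"
    and card_ge: "card B \<le> card I"
  shows "mbasis indep I"
  unfolding mbasis_def
proof (intro conjI allI impI I)
  fix X assume X: "indep X \<and> I \<subseteq> X"
  then have "finite X"
    using matroid_indep_subset[OF M] matroid_finite[OF M] finite_subset by blast
  moreover have "card X \<le> card I"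
    using card_indep_le_card_basis[OF M B] X card_ge by (meson le_trans)
  ultimately show "X = I" using X by (metis card_seteq)
qed

lemma finite_mrank_cards:
  assumes "matroid E indep"
  shows "finite {card I | I. I \<subseteq> X \<and> indep I}"
proof (rule finite_subset)
  show "{card I | I. I \<subseteq> X \<and> indep I} \<subseteq> {..card E}"
    using matroid_indep_subset[OF assms] matroid_finite[OF assms] card_mono by fastforce
qed simp

lemma card_indep_le_mrank:
  assumes "matroid E indep" and "indep I" and "I \<subseteq> X"
  shows "card I \<le> mrank indep X"
  unfolding mrank_def using assms by (intro Max_ge[OF finite_mrank_cards]) blast+

lemma mrank_ground_eq_card_basis:
  assumes M: "matroid E indep" and B: "mbasis indep B"
  shows "mrank indep E = card B"
proof (rule antisym)
  show "mrank indep E \<le> card B"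
    unfolding mrank_def
    using card_indep_le_card_basis[OF M B] matroid_indep_empty[OF M]
    by (intro Max.boundedI[OF finite_mrank_cards[OF M]]) blast+
  show "card B \<le> mrank indep E"
    using B matroid_indep_subset[OF M] unfolding mbasis_def by (blast intro: card_indep_le_mrank[OF M])
qed

lemma dependent_contains_circuit:
  assumes "finite Z" and "Z \<subseteq> E" and "\<not> P Z"
  shows "\<exists>C \<subseteq> Z. mcircuit E P C"
  using assms
proof (induction "card Z" arbitrary: Z rule: less_induct)
  case less
  show ?case
  proof (cases "\<forall>D. D \<subset> Z \<longrightarrow> P D")
    case True
    then show ?thesis using less.prems unfolding mcircuit_def by blast
  next
    case False
    then obtain D where D: "D \<subset> Z" "\<not> P D" by blast
    with less.prems have "card D < card Z" "finite D" "D \<subseteq> E"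
      by (auto simp: psubset_card_mono finite_subset)
    with less.hyps D show ?thesis by (meson order.trans psubset_imp_subset)
  qed
qed

lemma indep_extend_maximal:
  assumes M: "matroid E indep" and J: "indep J" "J \<subseteq> H" and HE: "H \<subseteq> E"
  shows "\<exists>I. J \<subseteq> I \<and> I \<subseteq> H \<and> indep I \<and> (\<forall>y\<in>H - I. \<not> indep (insert y I))"
  using J
proof (induction "card H - card J" arbitrary: J rule: less_induct)
  case less
  show ?case
  proof (cases "\<forall>y\<in>H - J. \<not> indep (insert y J)")
    case True
    then show ?thesis using less.prems by blast
  next
    case False
    then obtain y where y: "y \<in> H - J" "indep (insert y J)" by blast
    have "finite H" using finite_subset[OF HE matroid_finite[OF M]] .
    moreover have "insert y J \<subseteq> H" using y less.prems by blast
    ultimately have "card (insert y J) \<le> card H" "finite J"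
      using less.prems(2) by (auto simp: finite_subset card_mono)
    moreover have "card (insert y J) = Suc (card J)"
      using y(1) \<open>finite J\<close> by simp
    ultimately have "card H - card (insert y J) < card H - card J" by linarith
    from less.hyps[OF this y(2) \<open>insert y J \<subseteq> H\<close>] show ?thesis
      by (meson order_trans subset_insertI)
  qed
qed

lemma circuit_cocircuit_Int_card_neq_1:
  assumes M: "matroid E indep" and C: "mcircuit E indep C" and D: "mcocircuit E indep D"
  shows "card (C \<inter> D) \<noteq> 1"
proof
  assume "card (C \<inter> D) = 1"
  then obtain e where CD: "C \<inter> D = {e}" by (rule card_1_singletonE)
  have DE: "D \<subseteq> E" and D_dep: "\<not> dual_indep E indep D"
    and D_min: "\<And>D'. D' \<subset> D \<Longrightarrow> dual_indep E indep D'"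
    using D unfolding mcocircuit_def mcircuit_def by auto
  have CE: "C \<subseteq> E" and C_dep: "\<not> indep C" and C_min: "\<And>C'. C' \<subset> C \<Longrightarrow> indep C'"
    using C unfolding mcircuit_def by auto
  have "D - {e} \<subset> D" using CD by blast
  then obtain B where B: "mbasis indep B" "D - {e} \<subseteq> E - B"
    using D_min unfolding dual_indep_def by blast
  have "indep (C - {e})" using C_min CD by blast
  moreover have "C - {e} \<subseteq> E - D" using CD CE by blast
  ultimately obtain I where I: "C - {e} \<subseteq> I" "I \<subseteq> E - D" "indep I"
    "\<forall>y\<in>(E - D) - I. \<not> indep (insert y I)"
    using indep_extend_maximal[OF M _ _ Diff_subset] by metis
  show False
  proof (cases "card I < card B")
    case True
    then obtain y where y: "y \<in> B - I" "indep (insert y I)"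
      using matroid_augment[OF M I(3)] B(1) unfolding mbasis_def by blast
    have "B \<subseteq> E" using B(1) matroid_indep_subset[OF M] unfolding mbasis_def by blast
    show False
    proof (cases "y = e")
      case True
      then have "C \<subseteq> insert y I" using I(1) by blast
      then show False using matroid_indep_mono[OF M y(2)] C_dep by blast
    next
      case False
      then have "y \<in> (E - D) - I" using y B(2) \<open>B \<subseteq> E\<close> by blast
      then show False using I(4) y(2) by blast
    qed
  next
    case False
    then have "mbasis indep I" using mbasis_if_card_ge_basis[OF M B(1) I(3)] by simp
    moreover have "D \<subseteq> E - I" using I(2) DE by blast
    ultimately show False using D_dep DE unfolding dual_indep_def by blast
  qed
qed

lemma mconn_ge_indep_coindep:
  assumes M: "matroid E indep" and XE: "X \<subseteq> E" and ZX: "Z \<subseteq> X"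
    and Z_indep: "indep Z" and Z_coindep: "dual_indep E indep Z"
  shows "2 * int (card Z) - int (card X) \<le> mconn E indep X"
proof -
  obtain B where B: "mbasis indep B" "Z \<subseteq> E - B"
    using Z_coindep unfolding dual_indep_def by blast
  have BE: "B \<subseteq> E" using B(1) matroid_indep_subset[OF M] unfolding mbasis_def by blast
  have "finite E" using matroid_finite[OF M] .
  then have fin: "finite X" "finite B" "finite Z"
    using finite_subset[OF XE] finite_subset[OF BE] finite_subset[OF ZX] by auto
  have "card Z \<le> mrank indep X" using card_indep_le_mrank[OF M Z_indep ZX] .
  moreover have "card (B - X) \<le> mrank indep (E - X)"
  proof (rule card_indep_le_mrank[OF M])
    show "indep (B - X)"
      using B(1) matroid_indep_mono[OF M _ Diff_subset] unfolding mbasis_def by blast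
    show "B - X \<subseteq> E - X" using BE by blast
  qed
  moreover have "mrank indep E = card B" using mrank_ground_eq_card_basis[OF M B(1)] .
  moreover have "card B \<le> card (B - X) + card (X - Z)"
  proof -
    have "B \<subseteq> (B - X) \<union> (X - Z)" using B(2) by blast
    then have "card B \<le> card ((B - X) \<union> (X - Z))" using fin by (intro card_mono) auto
    also have "\<dots> \<le> card (B - X) + card (X - Z)" by (rule card_Un_le)
    finally show ?thesis .
  qed
  moreover have "card (X - Z) = card X - card Z" "card Z \<le> card X"
    using card_Diff_subset[OF fin(3) ZX] card_mono[OF fin(1) ZX] by auto
  ultimately show ?thesis unfolding mconn_def by linarith
qed

lemma mconn_Diff:
  assumes "X \<subseteq> E"
  shows "mconn E indep (E - X) = mconn E indep X"
  using assms by (simp add: mconn_def double_diff)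

lemma card_Diff_Diff_add:
  assumes "finite I" and "F \<subseteq> I" and "Q \<subseteq> I" and "F \<inter> Q = {}"
  shows "card (I - F - Q) + card F + card Q = card I"
proof -
  have "finite F" "finite Q" using assms(1-3) by (auto simp: finite_subset)
  then have "card (F \<union> Q) = card F + card Q" using assms(4) by (rule card_Un_disjoint)
  moreover have "card (I - (F \<union> Q)) = card I - card (F \<union> Q)"
    using assms(2,3) \<open>finite F\<close> \<open>finite Q\<close> by (simp add: card_Diff_subset)
  moreover have "card (F \<union> Q) \<le> card I" using assms(1-3) by (simp add: card_mono)
  moreover have "I - F - Q = I - (F \<union> Q)" by blast
  ultimately show ?thesis by simp
qed

locale pair_partition =
  fixes E :: "'a set" and r :: nat and A :: "nat \<Rightarrow> 'a set"
  assumes card_pair: "i \<in> {1..r} \<Longrightarrow> card (A i) = 2"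
    and pairs_disjoint: "i \<in> {1..r} \<Longrightarrow> j \<in> {1..r} \<Longrightarrow> i \<noteq> j \<Longrightarrow> A i \<inter> A j = {}"
    and Union_pairs: "(\<Union>i\<in>{1..r}. A i) = E"
begin

abbreviation pairs :: "nat set \<Rightarrow> 'a set" where
  "pairs J \<equiv> \<Union>j\<in>J. A j"

lemma pair_subset: "i \<in> {1..r} \<Longrightarrow> A i \<subseteq> E"
  using Union_pairs by blast

lemma finite_pair: "i \<in> {1..r} \<Longrightarrow> finite (A i)"
  using card_pair card.infinite by fastforce

lemma pair_nonempty: "i \<in> {1..r} \<Longrightarrow> A i \<noteq> {}"
  using card_pair by fastforce

lemma pair_index_unique:
  "i \<in> {1..r} \<Longrightarrow> j \<in> {1..r} \<Longrightarrow> x \<in> A i \<Longrightarrow> x \<in> A j \<Longrightarrow> i = j"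
  using pairs_disjoint by blast

lemma card_pairs:
  assumes "F \<subseteq> {1..r}"
  shows "card (pairs F) = 2 * card F"
proof -
  have "finite F" using assms by (rule finite_subset) simp
  then have "card (pairs F) = (\<Sum>i\<in>F. card (A i))"
    using assms finite_pair pairs_disjoint by (intro card_UN_disjoint) (auto simp: subset_iff)
  also have "\<dots> = 2 * card F"
    using assms card_pair by (simp add: subset_iff)
  finally show ?thesis .
qed

lemma card_pairs_Un_transversal:
  assumes F: "F \<subseteq> {1..r}" and G: "G \<subseteq> {1..r}" and FG: "F \<inter> G = {}"
    and f: "\<And>i. i \<in> G \<Longrightarrow> f i \<in> A i"
  shows "card (pairs F \<union> f ` G) = 2 * card F + card G"
proof -
  have f_other: "f i \<notin> A j" if "i \<in> G" "j \<in> G \<union> F" "i \<noteq> j" for i j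
  proof -
    have "A i \<inter> A j = {}" using that F G by (intro pairs_disjoint) auto
    then show ?thesis using f[OF that(1)] by blast
  qed
  have "inj_on f G"
  proof (rule inj_onI)
    fix i j assume "i \<in> G" "j \<in> G" "f i = f j"
    then show "i = j" using f[of j] f_other[of i j] by auto
  qed
  then have "card (f ` G) = card G" by (rule card_image)
  moreover have "pairs F \<inter> f ` G = {}"
  proof (rule equals0I)
    fix x assume "x \<in> pairs F \<inter> f ` G"
    then obtain m i where "m \<in> F" "i \<in> G" "x = f i" "f i \<in> A m" by blast
    then show False using f_other[of i m] FG by blast
  qed
  moreover have "finite F" "finite G"
    using finite_subset[OF F] finite_subset[OF G] by simp_all
  then have "finite (pairs F)" "finite (f ` G)" using F finite_pair by auto
  ultimately show ?thesis by (simp add: card_Un_disjoint card_pairs[OF F])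
qed

lemma finite_ground: "finite E"
  using Union_pairs finite_pair by (metis finite_UN_I finite_atLeastAtMost)

lemma card_Int_pair:
  assumes "i \<in> {1..r}"
  shows "card (X \<inter> A i) + of_bool (A i \<inter> X = {}) = 1 + of_bool (A i \<subseteq> X)"
proof (cases "A i \<subseteq> X")
  case True
  moreover have "A i \<inter> X \<noteq> {}" using True pair_nonempty[OF assms] by blast
  ultimately show ?thesis using card_pair[OF assms] by (simp add: Int_absorb1)
next
  case False
  show ?thesis
  proof (cases "A i \<inter> X = {}")
    case True
    then show ?thesis using False by (simp add: Int_commute)
  next
    case disj: False
    have "X \<inter> A i \<subset> A i" using False by blast
    then have "card (X \<inter> A i) < 2"
      using psubset_card_mono[OF finite_pair[OF assms]] card_pair[OF assms] by simp
    moreover have "X \<inter> A i \<noteq> {}" using disj by blast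
    then have "card (X \<inter> A i) \<noteq> 0" using finite_pair[OF assms] by simp
    ultimately show ?thesis using False disj by simp
  qed
qed

lemma card_add_card_disjoint_pairs:
  assumes "X \<subseteq> E"
  shows "card X + card {i\<in>{1..r}. A i \<inter> X = {}} = card {i\<in>{1..r}. A i \<subseteq> X} + r"
proof -
  have "X = (\<Union>i\<in>{1..r}. X \<inter> A i)" using assms Union_pairs by blast
  also have "card \<dots> = (\<Sum>i\<in>{1..r}. card (X \<inter> A i))"
    using finite_pair pairs_disjoint by (intro card_UN_disjoint) blast+
  moreover have count: "(\<Sum>i\<in>{1..r}. of_bool (P i)) = card {i\<in>{1..r}. P i}" for P
    by (simp add: Int_def)
  ultimately have "card X + card {i\<in>{1..r}. A i \<inter> X = {}}
      = (\<Sum>i\<in>{1..r}. card (X \<inter> A i) + of_bool (A i \<inter> X = {}))"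
    by (simp only: sum.distrib)
  also have "\<dots> = (\<Sum>i\<in>{1..r}. 1 + of_bool (A i \<subseteq> X))"
    using card_Int_pair by (intro sum.cong) auto
  also have "\<dots> = card {i\<in>{1..r}. A i \<subseteq> X} + r"
    by (simp only: sum.distrib count) simp
  finally show ?thesis .
qed

lemma obtain_pairs_psupset:
  assumes F: "F \<subseteq> {1..r}" and "card F < t" and "t \<le> r"
  obtains K where "K \<subseteq> {1..r}" "card K = t" "pairs F \<subset> pairs K"
proof -
  have "finite F" using F by (rule finite_subset) simp
  then have "card ({1..r} - F) = r - card F" using card_Diff_subset[OF _ F] by simp
  then have "t - card F \<le> card ({1..r} - F)" using \<open>t \<le> r\<close> by simp
  then obtain T where T: "T \<subseteq> {1..r} - F" "card T = t - card F" "finite T"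
    by (rule obtain_subset_with_card_n)
  have "card T \<noteq> 0" using T(2) \<open>card F < t\<close> by simp
  then obtain j where j: "j \<in> T" by (metis card.empty ex_in_conv)
  have "F \<union> T \<subseteq> {1..r}" using F T by blast
  moreover have "card (F \<union> T) = t"
    using T \<open>card F < t\<close> \<open>finite F\<close> by (subst card_Un_disjoint) auto
  moreover have "pairs F \<subset> pairs (F \<union> T)"
  proof -
    have jr: "j \<in> {1..r}" "j \<notin> F" using j T(1) by auto
    then obtain x where x: "x \<in> A j" using pair_nonempty by blast
    have "A j \<inter> A i = {}" if "i \<in> F" for i
      using that jr F by (intro pairs_disjoint) auto
    then have "x \<notin> pairs F" using x by blast
    moreover have "x \<in> pairs (F \<union> T)" using x j by blast
    ultimately show ?thesis by blast
  qed
  ultimately show thesis by (rule that)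
qed

lemma subset_pairs_if_orthogonal:
  assumes "0 < t" and F: "F \<subseteq> {1..r}" and G: "G \<subseteq> {1..r}" and FG: "F \<inter> G = {}"
    and untouched: "t - 1 \<le> card ({1..r} - F - G)"
    and f: "\<And>i. i \<in> G \<Longrightarrow> f i \<in> A i"
    and C: "C \<subseteq> pairs F \<union> f ` G"
    and orth: "\<And>K. K \<subseteq> {1..r} \<Longrightarrow> card K = t \<Longrightarrow> card (C \<inter> pairs K) \<noteq> 1"
  shows "C \<subseteq> pairs F"
proof
  fix x assume "x \<in> C"
  show "x \<in> pairs F"
  proof (rule ccontr)
    assume "x \<notin> pairs F"
    then obtain i where i: "i \<in> G" "x = f i" using \<open>x \<in> C\<close> C by blast
    obtain T where T: "T \<subseteq> {1..r} - F - G" "card T = t - 1" "finite T"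
      using untouched by (rule obtain_subset_with_card_n)
    have "i \<notin> T" using T(1) i(1) by blast
    then have K: "insert i T \<subseteq> {1..r}" "card (insert i T) = t"
      using T i(1) G \<open>0 < t\<close> by auto
    have "C \<inter> pairs (insert i T) = {x}"
    proof
      show "{x} \<subseteq> C \<inter> pairs (insert i T)" using \<open>x \<in> C\<close> i f by blast
      show "C \<inter> pairs (insert i T) \<subseteq> {x}"
      proof
        fix y assume y: "y \<in> C \<inter> pairs (insert i T)"
        then obtain j where j: "j \<in> insert i T" "y \<in> A j" by blast
        have "j \<in> {1..r}" "j \<notin> F" using j K(1) T(1) i FG by auto
        from y C consider m where "m \<in> F" "y \<in> A m" | m where "m \<in> G" "y = f m" by blast
        then show "y \<in> {x}"
        proof cases
          case (1 m)
          then have "m = j" using pair_index_unique F j \<open>j \<in> {1..r}\<close> by blast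
          then show ?thesis using 1 \<open>j \<notin> F\<close> by blast
        next
          case (2 m)
          then have "m = j" using pair_index_unique f G j \<open>j \<in> {1..r}\<close> by blast
          then have "j = i" using 2 j T(1) by blast
          then show ?thesis using 2 i \<open>m = j\<close> by simp
        qed
      qed
    qed
    then show False using orth[OF K] by simp
  qed
qed

lemma pairs_Un_transversal_independent:
  assumes "0 < t" and "t \<le> r"
    and circuit: "\<And>K. K \<subseteq> {1..r} \<Longrightarrow> card K = t \<Longrightarrow> mcircuit E P (pairs K)"
    and orth: "\<And>C K. mcircuit E P C \<Longrightarrow> K \<subseteq> {1..r} \<Longrightarrow> card K = t \<Longrightarrow> card (C \<inter> pairs K) \<noteq> 1"
    and F: "F \<subseteq> {1..r}" and G: "G \<subseteq> {1..r}" and FG: "F \<inter> G = {}" and "card F < t"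
    and untouched: "t - 1 \<le> card ({1..r} - F - G)"
    and f: "\<And>i. i \<in> G \<Longrightarrow> f i \<in> A i"
  shows "P (pairs F \<union> f ` G)"
proof (rule ccontr)
  let ?Z = "pairs F \<union> f ` G"
  assume "\<not> P ?Z"
  have "?Z \<subseteq> E" using F G f pair_subset by blast
  moreover have "finite ?Z" using calculation finite_ground by (rule finite_subset)
  ultimately obtain C where C: "C \<subseteq> ?Z" "mcircuit E P C"
    using dependent_contains_circuit \<open>\<not> P ?Z\<close> by metis
  obtain K where K: "K \<subseteq> {1..r}" "card K = t" "pairs F \<subset> pairs K"
    using F \<open>card F < t\<close> \<open>t \<le> r\<close> by (rule obtain_pairs_psupset)
  have "C \<subseteq> pairs F"
    using \<open>0 < t\<close> F G FG untouched f C(1) orth[OF C(2)] by (rule subset_pairs_if_orthogonal)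
  then have "C \<subset> pairs K" using K(3) by (rule subset_psubset_trans)
  then have "P C" using circuit[OF K(1,2)] unfolding mcircuit_def by blast
  then show False using C(2) unfolding mcircuit_def by blast
qed

end

locale t_spike_partition = pair_partition +
  fixes indep :: "'a set \<Rightarrow> bool" and t :: nat
  assumes matroid: "matroid E indep" and t_pos: "0 < t" and t_le_r: "t \<le> r"
    and circuit_pairs: "\<And>K. K \<subseteq> {1..r} \<Longrightarrow> card K = t \<Longrightarrow> mcircuit E indep (\<Union>j\<in>K. A j)"
    and cocircuit_pairs: "\<And>K. K \<subseteq> {1..r} \<Longrightarrow> card K = t \<Longrightarrow> mcocircuit E indep (\<Union>j\<in>K. A j)"
begin

lemma pairs_Un_transversal_indep_coindep:
  assumes F: "F \<subseteq> {1..r}" and G: "G \<subseteq> {1..r}" and FG: "F \<inter> G = {}" and "card F < t"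
    and untouched: "t - 1 \<le> card ({1..r} - F - G)"
    and f: "\<And>i. i \<in> G \<Longrightarrow> f i \<in> A i"
  shows "indep (pairs F \<union> f ` G)" and "dual_indep E indep (pairs F \<union> f ` G)"
proof -
  show "indep (pairs F \<union> f ` G)"
  proof (rule pairs_Un_transversal_independent[OF t_pos t_le_r])
    show "card (C \<inter> pairs K) \<noteq> 1" if "mcircuit E indep C" "K \<subseteq> {1..r}" "card K = t" for C K
      using circuit_cocircuit_Int_card_neq_1[OF matroid that(1) cocircuit_pairs[OF that(2,3)]] .
  qed (use circuit_pairs assms in auto)
  show "dual_indep E indep (pairs F \<union> f ` G)"
  proof (rule pairs_Un_transversal_independent[OF t_pos t_le_r])
    show "card (C \<inter> pairs K) \<noteq> 1"
      if "mcircuit E (dual_indep E indep) C" "K \<subseteq> {1..r}" "card K = t" for C K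
      using circuit_cocircuit_Int_card_neq_1[OF matroid circuit_pairs[OF that(2,3)]] that(1)
      by (simp add: mcocircuit_def Int_commute)
  qed (use cocircuit_pairs assms in \<open>auto simp: mcocircuit_def\<close>)
qed

lemma mconn_ge_transversal:
  assumes X: "X \<subseteq> E"
    and F: "F \<subseteq> {i\<in>{1..r}. A i \<subseteq> X}" and G: "G \<subseteq> {i\<in>{1..r}. A i \<inter> X \<noteq> {}}"
    and FG: "F \<inter> G = {}" and "card F < t"
    and untouched: "t - 1 \<le> card ({1..r} - F - G)"
  shows "4 * int (card F) + 2 * int (card G) - int (card X) \<le> mconn E indep X"
proof -
  have "\<forall>i\<in>G. \<exists>x. x \<in> A i \<inter> X" using G by blast
  then obtain f where f: "\<And>i. i \<in> G \<Longrightarrow> f i \<in> A i \<inter> X" by metis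
  have FG_range: "F \<subseteq> {1..r}" "G \<subseteq> {1..r}" using F G by auto
  have f_pair: "\<And>i. i \<in> G \<Longrightarrow> f i \<in> A i" using f by blast
  have "pairs F \<union> f ` G \<subseteq> X" using F f by blast
  from mconn_ge_indep_coindep[OF matroid X this
      pairs_Un_transversal_indep_coindep[OF FG_range FG \<open>card F < t\<close> untouched f_pair]]
  show ?thesis using card_pairs_Un_transversal[OF FG_range FG f_pair] by simp
qed

lemma mconn_ge_if_many_pairs_disjoint:
  assumes X: "X \<subseteq> E" and many: "t - 1 \<le> card {i\<in>{1..r}. A i \<inter> X = {}}"
  shows "int (min (card X) (2 * t - 2)) \<le> mconn E indep X"
proof -
  define P where "P = {i\<in>{1..r}. A i \<subseteq> X}"
  define Q where "Q = {i\<in>{1..r}. A i \<inter> X = {}}"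
  have PQ: "P \<subseteq> {1..r}" "Q \<subseteq> {1..r}" "P \<inter> Q = {}"
    using pair_nonempty unfolding P_def Q_def by auto
  obtain F where F: "F \<subseteq> P" "card F = min (card P) (t - 1)" "finite F"
    using min.cobounded1 by (rule obtain_subset_with_card_n)
  define G where "G = {1..r} - F - Q"
  have "F \<subseteq> {1..r}" "F \<inter> Q = {}" using F(1) PQ by auto
  then have "{1..r} - F - G = Q" using PQ unfolding G_def by blast
  then have "t - 1 \<le> card ({1..r} - F - G)" using many unfolding Q_def by simp
  moreover have "G \<subseteq> {i\<in>{1..r}. A i \<inter> X \<noteq> {}}" unfolding G_def Q_def by blast
  moreover have "F \<inter> G = {}" unfolding G_def by blast
  moreover have "card F < t" using F(2) t_pos by linarith
  moreover have "F \<subseteq> {i\<in>{1..r}. A i \<subseteq> X}" using F(1) unfolding P_def .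
  ultimately have bound: "4 * int (card F) + 2 * int (card G) - int (card X) \<le> mconn E indep X"
    using mconn_ge_transversal[OF X] by blast
  have "card G + card F + card Q = r"
    unfolding G_def using card_Diff_Diff_add[of "{1..r}" F Q] \<open>F \<subseteq> {1..r}\<close> \<open>F \<inter> Q = {}\<close> PQ
    by simp
  moreover have "card X + card Q = card P + r"
    using card_add_card_disjoint_pairs[OF X] unfolding P_def Q_def .
  moreover have "card P + card Q \<le> r"
    using card_Diff_Diff_add[of "{1..r}" P Q] PQ by simp
  ultimately show ?thesis using bound F(2) by (cases "card P \<le> t - 1") auto
qed

lemma mconn_ge_if_few_pairs_inside_and_disjoint:
  assumes X: "X \<subseteq> E" and r_ge: "4 * t - 4 \<le> r"
    and few_inside: "card {i\<in>{1..r}. A i \<subseteq> X} \<le> t - 1"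
    and few_disjoint: "card {i\<in>{1..r}. A i \<inter> X = {}} \<le> t - 1"
  shows "int (2 * t - 2) \<le> mconn E indep X"
proof -
  define P where "P = {i\<in>{1..r}. A i \<subseteq> X}"
  define Q where "Q = {i\<in>{1..r}. A i \<inter> X = {}}"
  have PQ: "P \<subseteq> {1..r}" "Q \<subseteq> {1..r}" "P \<inter> Q = {}"
    using pair_nonempty unfolding P_def Q_def by auto
  have "card ({1..r} - P - Q) + card P + card Q = r"
    using card_Diff_Diff_add[of "{1..r}" P Q] PQ by simp
  then have "r - card P - (t - 1) \<le> card ({1..r} - P - Q)"
    using few_disjoint unfolding Q_def by linarith
  \<comment> \<open>use as many pairs meeting X in one element as possible, leaving exactly t - 1 untouched\<close>
  then obtain G where G: "G \<subseteq> {1..r} - P - Q" "card G = r - card P - (t - 1)" "finite G"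
    by (rule obtain_subset_with_card_n)
  have "G \<subseteq> {1..r}" "P \<inter> G = {}" using G(1) by auto
  then have "card ({1..r} - P - G) + card P + card G = r"
    using card_Diff_Diff_add[of "{1..r}" P G] PQ by simp
  moreover have "card P + (t - 1) \<le> r" using few_inside r_ge t_pos unfolding P_def by linarith
  ultimately have "t - 1 \<le> card ({1..r} - P - G)" using G(2) by linarith
  moreover have "G \<subseteq> {i\<in>{1..r}. A i \<inter> X \<noteq> {}}" using G(1) unfolding Q_def by blast
  moreover have "card P < t" using few_inside t_pos unfolding P_def by linarith
  ultimately have bound: "4 * int (card P) + 2 * int (card G) - int (card X) \<le> mconn E indep X"
    using mconn_ge_transversal[OF X] \<open>P \<inter> G = {}\<close> unfolding P_def by blast
  have "card X + card Q = card P + r"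
    using card_add_card_disjoint_pairs[OF X] unfolding P_def Q_def .
  then show ?thesis using bound G(2) r_ge \<open>card P + (t - 1) \<le> r\<close> by linarith
qed

lemma mconn_ge_min:
  assumes X: "X \<subseteq> E" and r_ge: "4 * t - 4 \<le> r"
  shows "int (min (min (card X) (card (E - X))) (2 * t - 2)) \<le> mconn E indep X"
proof -
  consider "t - 1 \<le> card {i\<in>{1..r}. A i \<inter> X = {}}"
    | "t - 1 \<le> card {i\<in>{1..r}. A i \<subseteq> X}"
    | "card {i\<in>{1..r}. A i \<subseteq> X} \<le> t - 1" "card {i\<in>{1..r}. A i \<inter> X = {}} \<le> t - 1"
    by linarith
  then show ?thesis
  proof cases
    case 1
    then show ?thesis using mconn_ge_if_many_pairs_disjoint[OF X] by linarith
  next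
    case 2
    have "{i\<in>{1..r}. A i \<inter> (E - X) = {}} = {i\<in>{1..r}. A i \<subseteq> X}"
      using pair_subset by blast
    then have "int (min (card (E - X)) (2 * t - 2)) \<le> mconn E indep (E - X)"
      using 2 by (intro mconn_ge_if_many_pairs_disjoint) auto
    then show ?thesis using mconn_Diff[OF X, of indep] by linarith
  next
    case 3
    then show ?thesis using mconn_ge_if_few_pairs_inside_and_disjoint[OF X r_ge] by linarith
  qed
qed

end

theorem lemma6p5:
  fixes E :: "'a set" and indep :: "'a set \<Rightarrow> bool" and t r :: nat
  assumes "matroid E indep"
    and "2 \<le> t"
    and "t_spike E indep t r"
    and "4 * t - 4 \<le> r"
  shows "n_connected E indep (2 * t - 1)"
proof -
  obtain A where A: "\<forall>i\<in>{1..r}. card (A i) = 2"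
      "\<forall>i\<in>{1..r}. \<forall>j\<in>{1..r}. i \<noteq> j \<longrightarrow> A i \<inter> A j = {}"
      "(\<Union>i\<in>{1..r}. A i) = E"
      "\<forall>J. J \<subseteq> {1..r} \<and> card J = t \<longrightarrow>
         mcircuit E indep (\<Union>j\<in>J. A j) \<and> mcocircuit E indep (\<Union>j\<in>J. A j)"
    and "0 < t" "t \<le> r"
    using assms(3) unfolding t_spike_def by blast
  interpret t_spike_partition E r A indep t
    using assms(1) A \<open>0 < t\<close> \<open>t \<le> r\<close> by unfold_locales auto
  show ?thesis
    unfolding n_connected_def k_separation_def
  proof (intro allI impI notI)
    fix k X
    assume "0 < k \<and> k < 2 * t - 1"
      and sep: "X \<subseteq> E \<and> mconn E indep X < int k \<and> k \<le> card X \<and> k \<le> card (E - X)"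
    then have "int k \<le> int (min (min (card X) (card (E - X))) (2 * t - 2))"
      using assms(2) by auto
    then show False using sep mconn_ge_min[OF _ assms(4), of X] by linarith
  qed
qed

end
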